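(* Let $\mathbb{K}$ be a field, $n>1$, $a=\sum_{j=0}^d c_j s^j\in\mathbb{K}[s]^n$ a non-zero row vector of degree $d$, and $A\in\mathbb{K}^{(2d+1)\times n(d+1)}$ the matrix whose $(i,\,kn+r)$ entry ($1\le i\le 2d+1$, $0\le k\le d$, $1\le r\le n$) is the $r$-th entry of $c_{i-1-k}$ (zero if $i-1-k\notin\{0,\dots,d\}$). Let $p$, $q$, $\tilde q$, $b_i$ ($i\in q$) be as in the context. Then for any $\iota\in\tilde q$ and any integer $k$ with $0\le k\le\left\lfloor\frac{n(d+1)-\iota}{n}\right\rfloor$, $$b_{\iota+kn}^\flat=s^k\,b_\iota^\flat+\sum_{\{j\in p\,\mid\, j<\iota,\ j+kn\in q\}}\alpha_j\,b_{j+kn}^\flat,$$ where the constants $\alpha_j\in\mathbb{K}$ are those in the expression $A_{*\iota}=\sum_{\{j\in p\mid j<\iota\}}\alpha_jA_{*j}$ of the $\iota$-th column of $A$ as a linear combination of the preceding pivotal columns.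
   Context: $A_{*j}$ is the $j$-th column of $A$. A column of a matrix is pivotal if it is either the first column and non-zero, or linearly independent of all previous columns; otherwise non-pivotal. $p$ is the set of pivotal indices of $A$, $q$ the set of non-pivotal indices, and $\tilde q=\{\min\varrho\mid\varrho\in q/(n)\}$ the set of basic non-pivotal indices (minimal elements of the classes of $q$ modulo $n$). Every non-pivotal column $A_{*i}$ is uniquely a linear combination $A_{*i}=\sum_{\{j\in p\mid j<i\}}\alpha^{(i)}_jA_{*j}$ of preceding pivotal columns. Define $V\in\mathbb{K}^{n(d+1)\times n(d+1)}$ with columns $v_i$: for $i\in p$, $v_i=e_i$; for $i\in q$, $v_i=\sum_{\{j\in p\mid j<i\}}\alpha^{(i)}_j e_j$, where $e_i$ is the $i$-th standard basis vector. For $i\in q$, $b_i=e_i-v_i$. For $v\in\mathbb{K}^{n(d+1)}$ in blocks $v=[w_0;\dots;w_d]$ with $w_i\in\mathbb{K}^n$, $v^\flat=\sum_{i=0}^d s^i w_i\in\mathbb{K}[s]^n$. *)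

theory Defs
  imports "HOL-Computational_Algebra.Polynomial"
begin

(* A row vector a in K[s]^n is a function a :: nat => 'a poly, entries a 1, ..., a n.
   Its coefficient vectors are c_j = (coeff (a 1) j, ..., coeff (a n) j).
   Indices of rows and columns of A are 1-based as in the paper; N = n*(d+1). *)

definition vdeg :: "nat \<Rightarrow> (nat \<Rightarrow> 'a::zero poly) \<Rightarrow> nat" where
  "vdeg n a = Max ((\<lambda>r. degree (a r)) ` {1..n})"

definition Amat :: "nat \<Rightarrow> nat \<Rightarrow> (nat \<Rightarrow> 'a::zero poly) \<Rightarrow> nat \<Rightarrow> nat \<Rightarrow> 'a" where
  "Amat n d a i j =
     (let k = (j - 1) div n; r = (j - 1) mod n + 1
      in if 1 \<le> i \<and> k \<le> i - 1 \<and> i - 1 - k \<le> d then coeff (a r) (i - 1 - k) else 0)"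

definition colA :: "nat \<Rightarrow> nat \<Rightarrow> (nat \<Rightarrow> 'a::zero poly) \<Rightarrow> nat \<Rightarrow> nat \<Rightarrow> 'a" where
  "colA n d a j = (\<lambda>i. if 1 \<le> i \<and> i \<le> 2 * d + 1 then Amat n d a i j else 0)"

(* pivotal: not a linear combination of the previous columns
   (for j = 1 this says: the first column is non-zero) *)
definition pivotal :: "nat \<Rightarrow> nat \<Rightarrow> (nat \<Rightarrow> 'a::field poly) \<Rightarrow> nat \<Rightarrow> bool" where
  "pivotal n d a j \<longleftrightarrow> 1 \<le> j \<and> j \<le> n * (d + 1) \<and>
     \<not> (\<exists>f. colA n d a j = (\<lambda>i. \<Sum>l\<in>{1..<j}. f l * colA n d a l i))"

definition piv :: "nat \<Rightarrow> nat \<Rightarrow> (nat \<Rightarrow> 'a::field poly) \<Rightarrow> nat set" where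
  "piv n d a = {j. pivotal n d a j}"

definition nonpiv :: "nat \<Rightarrow> nat \<Rightarrow> (nat \<Rightarrow> 'a::field poly) \<Rightarrow> nat set" where
  "nonpiv n d a = {1..n * (d + 1)} - piv n d a"

definition basic_nonpiv :: "nat \<Rightarrow> nat \<Rightarrow> (nat \<Rightarrow> 'a::field poly) \<Rightarrow> nat set" where
  "basic_nonpiv n d a =
     {\<iota> \<in> nonpiv n d a. \<forall>j \<in> nonpiv n d a. j mod n = \<iota> mod n \<longrightarrow> \<iota> \<le> j}"

definition alpha :: "nat \<Rightarrow> nat \<Rightarrow> (nat \<Rightarrow> 'a::field poly) \<Rightarrow> nat \<Rightarrow> nat \<Rightarrow> 'a" where
  "alpha n d a i = (THE f. (\<forall>j. f j \<noteq> 0 \<longrightarrow> j \<in> piv n d a \<and> j < i) \<and>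
      colA n d a i = (\<lambda>m. \<Sum>j\<in>{j \<in> piv n d a. j < i}. f j * colA n d a j m))"

definition evec :: "nat \<Rightarrow> nat \<Rightarrow> 'a::field" where
  "evec i = (\<lambda>m. if m = i then 1 else 0)"

definition vcol :: "nat \<Rightarrow> nat \<Rightarrow> (nat \<Rightarrow> 'a::field poly) \<Rightarrow> nat \<Rightarrow> nat \<Rightarrow> 'a" where
  "vcol n d a i = (if i \<in> piv n d a then evec i
     else (\<lambda>m. \<Sum>j\<in>{j \<in> piv n d a. j < i}. alpha n d a i j * evec j m))"

definition bvec :: "nat \<Rightarrow> nat \<Rightarrow> (nat \<Rightarrow> 'a::field poly) \<Rightarrow> nat \<Rightarrow> nat \<Rightarrow> 'a" where
  "bvec n d a i = (\<lambda>m. evec i m - vcol n d a i m)"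

definition flat :: "nat \<Rightarrow> nat \<Rightarrow> (nat \<Rightarrow> 'a::comm_monoid_add) \<Rightarrow> nat \<Rightarrow> 'a poly" where
  "flat n d v = (\<lambda>r. if 1 \<le> r \<and> r \<le> n then (\<Sum>k\<le>d. monom (v (k * n + r)) k) else 0)"

end

theory Submission
  imports Defs
begin

text \<open>The matrix A is block Toeplitz: adding k n to a column index moves the column down by k rows.
  So the relation expressing column \<iota> through the pivotal columns j < \<iota> shifts to a relation
  expressing column \<iota> + k n through the columns j + k n. Expanding each of these in pivotal columns
  and using uniqueness of such expansions gives v(\<iota> + k n) = \<Sum>j. \<alpha>(j) v(j + k n).
  Writing v = e - b, with b vanishing at pivotal indices, yields the identity for vectors in
  K^(n(d+1)), and flat turns the shift of a vector by k n positions into multiplication by s^k.\<close>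

definition vshift :: "nat \<Rightarrow> (nat \<Rightarrow> 'a::zero) \<Rightarrow> nat \<Rightarrow> 'a" where
  "vshift s v = (\<lambda>m. if s < m then v (m - s) else 0)"

lemma vshift_lincomb:
  fixes v :: "'i \<Rightarrow> nat \<Rightarrow> 'a::semiring_0"
  shows "vshift s (\<lambda>m. \<Sum>j\<in>S. c j * v j m) = (\<lambda>m. \<Sum>j\<in>S. c j * vshift s (v j) m)"
  by (simp add: vshift_def fun_eq_iff)

lemma vshift_evec: "0 < j \<Longrightarrow> vshift s (evec j) = evec (j + s)"
  by (auto simp: vshift_def evec_def fun_eq_iff)

lemma vshift_diff:
  fixes u v :: "nat \<Rightarrow> 'a::group_add"
  shows "vshift s (\<lambda>m. u m - v m) = (\<lambda>m. vshift s u m - vshift s v m)"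
  by (simp add: vshift_def fun_eq_iff)

lemma X_power_eq_monom: "([:0, 1:] :: 'a::comm_semiring_1 poly) ^ k = monom 1 k"
  by (simp add: monom_altdef)

lemma coeff_flat:
  "coeff (flat n d v r) t = (if 1 \<le> r \<and> r \<le> n \<and> t \<le> d then v (t * n + r) else 0)"
  by (auto simp: flat_def coeff_sum)

lemma flat_add: "flat n d (\<lambda>m. u m + v m) r = flat n d u r + flat n d v r"
  by (rule poly_eqI) (simp add: coeff_flat)

lemma flat_lincomb:
  "flat n d (\<lambda>m. \<Sum>j\<in>S. c j * v j m) r = (\<Sum>j\<in>S. smult (c j) (flat n d (v j) r))"
  by (rule poly_eqI) (auto simp: coeff_flat coeff_sum)

lemma flat_vshift:
  fixes v :: "nat \<Rightarrow> 'a::comm_ring_1"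
  assumes "\<And>m. n * (d + 1) - k * n < m \<Longrightarrow> v m = 0"
  shows "flat n d (vshift (k * n) v) r = [:0, 1:] ^ k * flat n d v r"
proof (rule poly_eqI)
  fix t
  have block: "k * n < t * n + r \<longleftrightarrow> k \<le> t" "t * n + r - k * n = (t - k) * n + r"
    if "1 \<le> r" "r \<le> n" "k \<le> t" for t
  proof -
    have "k * n \<le> t * n" using that(3) by (rule mult_le_mono1)
    then show "k * n < t * n + r \<longleftrightarrow> k \<le> t" "t * n + r - k * n = (t - k) * n + r"
      using that by (linarith, simp add: diff_mult_distrib)
  qed
  have below: "\<not> k * n < t * n + r" if "r \<le> n" "t < k" for t
  proof -
    have "(t + 1) * n \<le> k * n" using that by (intro mult_le_mono1) simp
    then show ?thesis using that by simp
  qed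
  have beyond: "v ((t - k) * n + r) = 0" if "1 \<le> r" "d < t" "k \<le> t"
  proof -
    have "(d + 1) * n \<le> t * n" using that by (intro mult_le_mono1) simp
    moreover have "(t - k) * n + k * n = t * n" using that by (simp add: add_mult_distrib[symmetric])
    ultimately show ?thesis using that by (intro assms) (simp add: mult.commute[of n])
  qed
  show "coeff (flat n d (vshift (k * n) v) r) t = coeff ([:0, 1:] ^ k * flat n d v r) t"
    using block[of t] below[of t] beyond
    by (auto simp: coeff_flat vshift_def X_power_eq_monom coeff_monom_mult not_le)
qed

lemma lincomb_of_lincombs:
  fixes G :: "'l \<Rightarrow> 't \<Rightarrow> 'a::comm_semiring_0"
  assumes "\<And>l. l \<in> L \<Longrightarrow> u l = (\<lambda>m. \<Sum>t\<in>T. G l t * w t m)"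
  shows "(\<lambda>m. \<Sum>l\<in>L. f l * u l m) = (\<lambda>m. \<Sum>t\<in>T. (\<Sum>l\<in>L. f l * G l t) * w t m)"
proof (rule ext)
  fix m
  have "(\<Sum>l\<in>L. f l * u l m) = (\<Sum>l\<in>L. \<Sum>t\<in>T. f l * G l t * w t m)"
    using assms by (simp add: sum_distrib_left mult.assoc)
  also have "\<dots> = (\<Sum>t\<in>T. (\<Sum>l\<in>L. f l * G l t) * w t m)"
    by (subst sum.swap) (simp add: sum_distrib_right)
  finally show "(\<Sum>l\<in>L. f l * u l m) = (\<Sum>t\<in>T. (\<Sum>l\<in>L. f l * G l t) * w t m)" .
qed

lemma piv_bounds: "j \<in> piv n d a \<Longrightarrow> 1 \<le> j \<and> j \<le> n * (d + 1)"
  by (simp add: piv_def pivotal_def)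

lemma colA_shift_block:
  assumes "0 < n" "1 \<le> j" "j + k * n \<le> n * (d + 1)"
  shows "colA n d a (j + k * n) = vshift k (colA n d a j)"
proof -
  obtain i where j: "j = Suc i" using assms(2) by (cases j) auto
  have "(j + k * n - 1) div n < d + 1"
    using assms by (simp add: less_mult_imp_div_less mult.commute)
  then show ?thesis using assms(1)
    by (auto simp: fun_eq_iff vshift_def colA_def Amat_def Let_def j)
qed

lemma not_pivotal_if_lincomb:
  assumes "colA n d a i = (\<lambda>m. \<Sum>t\<in>{t \<in> piv n d a. t < i}. f t * colA n d a t m)"
  shows "i \<notin> piv n d a"
proof
  assume "i \<in> piv n d a"
  moreover have "colA n d a i = (\<lambda>m. \<Sum>l\<in>{1..<i}. (if l \<in> piv n d a then f l else 0) * colA n d a l m)"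
    unfolding assms
    by (intro ext sum.mono_neutral_cong_left) (auto dest: piv_bounds)
  ultimately show False by (auto simp: piv_def pivotal_def)
qed

lemma pivot_columns_independent:
  assumes "finite S" and "S \<subseteq> piv n d a"
    and "\<And>m. (\<Sum>l\<in>S. g l * colA n d a l m) = 0"
  shows "\<forall>l\<in>S. g l = 0"
proof (rule ccontr)
  assume "\<not> (\<forall>l\<in>S. g l = 0)"
  define T where "T = {l\<in>S. g l \<noteq> 0}"
  have "finite T" "T \<noteq> {}" using assms(1) \<open>\<not> (\<forall>l\<in>S. g l = 0)\<close> by (auto simp: T_def)
  define j where "j = Max T"
  have "j \<in> T" using \<open>finite T\<close> \<open>T \<noteq> {}\<close> by (simp add: j_def)
  then have "j \<in> piv n d a" "g j \<noteq> 0" using assms(2) by (auto simp: T_def)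
  have below: "T - {j} \<subseteq> {1..<j}"
    using Max_ge[OF \<open>finite T\<close>] assms(2) by (fastforce simp: j_def T_def dest: piv_bounds)
  \<comment> \<open>the largest index with a non-zero coefficient would be a combination of earlier columns\<close>
  have "colA n d a j m = (\<Sum>l\<in>T - {j}. (- g l / g j) * colA n d a l m)" for m
  proof -
    have "(\<Sum>l\<in>S. g l * colA n d a l m) = (\<Sum>l\<in>T. g l * colA n d a l m)"
      by (rule sum.mono_neutral_right) (auto simp: T_def assms(1))
    also have "\<dots> = g j * colA n d a j m + (\<Sum>l\<in>T - {j}. g l * colA n d a l m)"
      by (rule sum.remove[OF \<open>finite T\<close> \<open>j \<in> T\<close>])
    finally show ?thesis using assms(3)[of m] \<open>g j \<noteq> 0\<close>
      by (simp add: sum_divide_distrib[symmetric] sum_negf field_simps add_eq_0_iff)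
  qed
  moreover have "(\<Sum>l\<in>{1..<j}. (if l \<in> T - {j} then - g l / g j else 0) * colA n d a l m)
      = (\<Sum>l\<in>T - {j}. (- g l / g j) * colA n d a l m)" for m
    by (rule sum.mono_neutral_cong_right) (use below in auto)
  ultimately have "colA n d a j = (\<lambda>m. \<Sum>l\<in>{1..<j}. (if l \<in> T - {j} then - g l / g j else 0) * colA n d a l m)"
    by (simp add: fun_eq_iff)
  then show False using \<open>j \<in> piv n d a\<close> by (auto simp: piv_def pivotal_def)
qed

lemma column_in_span_of_pivots:
  assumes "1 \<le> j" "j \<le> n * (d + 1)"
  shows "\<exists>g. (\<forall>t. g t \<noteq> 0 \<longrightarrow> t \<in> piv n d a \<and> t \<le> j) \<and>
    colA n d a j = (\<lambda>m. \<Sum>t\<in>{1..n * (d + 1)}. g t * colA n d a t m)"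
  using assms
proof (induction j rule: less_induct)
  case (less j)
  show ?case
  proof (cases "j \<in> piv n d a")
    case True
    then show ?thesis using less.prems
      by (intro exI[of _ "\<lambda>t. of_bool (t = j)"]) (simp add: fun_eq_iff)
  next
    case False
    then obtain f where f: "colA n d a j = (\<lambda>m. \<Sum>l\<in>{1..<j}. f l * colA n d a l m)"
      using less.prems by (auto simp: piv_def pivotal_def)
    have "\<forall>l\<in>{1..<j}. \<exists>g. (\<forall>t. g t \<noteq> 0 \<longrightarrow> t \<in> piv n d a \<and> t \<le> l) \<and>
        colA n d a l = (\<lambda>m. \<Sum>t\<in>{1..n * (d + 1)}. g t * colA n d a t m)"
      using less.prems by (intro ballI less.IH) auto
    then obtain G where G: "\<And>l. l \<in> {1..<j} \<Longrightarrow> (\<forall>t. G l t \<noteq> 0 \<longrightarrow> t \<in> piv n d a \<and> t \<le> l) \<and>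
        colA n d a l = (\<lambda>m. \<Sum>t\<in>{1..n * (d + 1)}. G l t * colA n d a t m)"
      by metis
    define g where "g t = (\<Sum>l\<in>{1..<j}. f l * G l t)" for t
    have "colA n d a j = (\<lambda>m. \<Sum>t\<in>{1..n * (d + 1)}. g t * colA n d a t m)"
      unfolding f g_def by (rule lincomb_of_lincombs) (use G in blast)
    moreover have "t \<in> piv n d a \<and> t \<le> j" if "g t \<noteq> 0" for t
    proof -
      obtain l where "l \<in> {1..<j}" "G l t \<noteq> 0"
        using \<open>g t \<noteq> 0\<close> unfolding g_def by (metis (no_types, lifting) mult_zero_right sum.neutral)
      then show ?thesis using G by force
    qed
    ultimately show ?thesis by blast
  qed
qed

lemma pivot_lincomb_unique:
  assumes "\<forall>j. f j \<noteq> 0 \<longrightarrow> j \<in> piv n d a \<and> j < i"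
    and "\<forall>j. g j \<noteq> 0 \<longrightarrow> j \<in> piv n d a \<and> j < i"
    and "(\<lambda>m. \<Sum>j\<in>{j \<in> piv n d a. j < i}. f j * colA n d a j m) =
         (\<lambda>m. \<Sum>j\<in>{j \<in> piv n d a. j < i}. g j * colA n d a j m)"
  shows "f = g"
proof -
  have "(\<Sum>j\<in>{j \<in> piv n d a. j < i}. (f j - g j) * colA n d a j m) = 0" for m
    using fun_cong[OF assms(3), of m] by (simp add: left_diff_distrib sum_subtractf)
  then have "\<forall>j\<in>{j \<in> piv n d a. j < i}. f j - g j = 0"
    by (intro pivot_columns_independent) auto
  show ?thesis
  proof
    fix j
    show "f j = g j"
    proof (cases "j \<in> piv n d a \<and> j < i")
      case True
      then show ?thesis using \<open>\<forall>j\<in>{j \<in> piv n d a. j < i}. f j - g j = 0\<close> by simp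
    next
      case False
      then have "f j = 0" "g j = 0" using assms(1,2) by blast+
      then show ?thesis by simp
    qed
  qed
qed

lemma alpha_eqI:
  assumes "\<forall>j. f j \<noteq> 0 \<longrightarrow> j \<in> piv n d a \<and> j < i"
    and "colA n d a i = (\<lambda>m. \<Sum>j\<in>{j \<in> piv n d a. j < i}. f j * colA n d a j m)"
  shows "alpha n d a i = f"
  unfolding alpha_def
proof (rule the_equality)
  fix g
  assume g: "(\<forall>j. g j \<noteq> 0 \<longrightarrow> j \<in> piv n d a \<and> j < i) \<and>
    colA n d a i = (\<lambda>m. \<Sum>j\<in>{j \<in> piv n d a. j < i}. g j * colA n d a j m)"
  then have "(\<lambda>m. \<Sum>j\<in>{j \<in> piv n d a. j < i}. g j * colA n d a j m) =
      (\<lambda>m. \<Sum>j\<in>{j \<in> piv n d a. j < i}. f j * colA n d a j m)"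
    using assms(2) by simp
  with g show "g = f" using pivot_lincomb_unique[OF _ assms(1)] by blast
qed (use assms in blast)

lemma alpha_lincomb:
  assumes "1 \<le> i" "i \<le> n * (d + 1)" "i \<notin> piv n d a"
  shows "\<forall>j. alpha n d a i j \<noteq> 0 \<longrightarrow> j \<in> piv n d a \<and> j < i"
    and "colA n d a i = (\<lambda>m. \<Sum>j\<in>{j \<in> piv n d a. j < i}. alpha n d a i j * colA n d a j m)"
proof -
  obtain g where g_supp': "\<forall>t. g t \<noteq> 0 \<longrightarrow> t \<in> piv n d a \<and> t \<le> i"
    and g: "colA n d a i = (\<lambda>m. \<Sum>t\<in>{1..n * (d + 1)}. g t * colA n d a t m)"
    using column_in_span_of_pivots[OF assms(1,2)] by blast
  have g_supp: "\<forall>t. g t \<noteq> 0 \<longrightarrow> t \<in> piv n d a \<and> t < i"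
    using g_supp' assms(3) le_neq_implies_less by blast
  have "colA n d a i = (\<lambda>m. \<Sum>j\<in>{j \<in> piv n d a. j < i}. g j * colA n d a j m)"
    unfolding g using g_supp assms(2)
    by (intro ext sum.mono_neutral_right) (auto dest: piv_bounds)
  moreover from this have "alpha n d a i = g" by (rule alpha_eqI[OF g_supp])
  ultimately show "\<forall>j. alpha n d a i j \<noteq> 0 \<longrightarrow> j \<in> piv n d a \<and> j < i"
    and "colA n d a i = (\<lambda>m. \<Sum>j\<in>{j \<in> piv n d a. j < i}. alpha n d a i j * colA n d a j m)"
    using g_supp by simp_all
qed

lemma sum_mult_evec:
  "finite S \<Longrightarrow> (\<Sum>j\<in>S. c j * evec j m) = (if m \<in> S then c m else 0)"
  by (simp add: evec_def if_distrib[where f="\<lambda>x. _ * x"] sum.delta' cong: if_cong)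

lemma vcol_nonpivotal:
  assumes "1 \<le> i" "i \<le> n * (d + 1)" "i \<notin> piv n d a"
  shows "vcol n d a i = alpha n d a i"
  using alpha_lincomb(1)[OF assms] assms(3) by (auto simp: fun_eq_iff vcol_def sum_mult_evec)

lemma vcol_support:
  assumes "1 \<le> i" "i \<le> n * (d + 1)" "vcol n d a i t \<noteq> 0"
  shows "t \<in> piv n d a \<and> t \<le> i"
proof (cases "i \<in> piv n d a")
  case True
  then show ?thesis using assms(3) by (auto simp: vcol_def evec_def split: if_splits)
next
  case False
  then show ?thesis using assms alpha_lincomb(1)[OF assms(1,2) False] vcol_nonpivotal[OF assms(1,2) False]
    by fastforce
qed

lemma column_eq_vcol_lincomb:
  assumes "1 \<le> i" "i \<le> n * (d + 1)" "i < M"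
  shows "colA n d a i = (\<lambda>m. \<Sum>t\<in>{t \<in> piv n d a. t < M}. vcol n d a i t * colA n d a t m)"
proof (cases "i \<in> piv n d a")
  case True
  then show ?thesis using assms(3)
    by (simp add: fun_eq_iff vcol_def evec_def if_distrib[where f="\<lambda>x. x * _"] sum.delta cong: if_cong)
next
  case False
  show ?thesis
    unfolding vcol_nonpivotal[OF assms(1,2) False]
    by (subst alpha_lincomb(2)[OF assms(1,2) False], intro ext sum.mono_neutral_left)
       (use alpha_lincomb(1)[OF assms(1,2) False] assms(3) in auto)
qed

lemma bvec_pivotal: "i \<in> piv n d a \<Longrightarrow> bvec n d a i = (\<lambda>m. 0)"
  by (simp add: bvec_def vcol_def)

lemma bvec_vanishes_above: "i < m \<Longrightarrow> bvec n d a i m = 0"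
  by (simp add: bvec_def vcol_def evec_def sum_mult_evec)

lemma vcol_shift_block:
  assumes "0 < n" "1 \<le> \<iota>" "\<iota> + k * n \<le> n * (d + 1)" "\<iota> \<notin> piv n d a"
  shows "\<iota> + k * n \<notin> piv n d a"
    and "vcol n d a (\<iota> + k * n) =
      (\<lambda>t. \<Sum>j\<in>{j \<in> piv n d a. j < \<iota>}. alpha n d a \<iota> j * vcol n d a (j + k * n) t)"
proof -
  define J where "J = {j \<in> piv n d a. j < \<iota>}"
  define T where "T = {t \<in> piv n d a. t < \<iota> + k * n}"
  define \<beta> where "\<beta> t = (\<Sum>j\<in>J. alpha n d a \<iota> j * vcol n d a (j + k * n) t)" for t
  have J_bounds: "1 \<le> j \<and> j + k * n \<le> n * (d + 1) \<and> j + k * n < \<iota> + k * n" if "j \<in> J" for j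
    using that assms(3) piv_bounds[of j n d a] by (auto simp: J_def)
  have "colA n d a (\<iota> + k * n) = vshift k (colA n d a \<iota>)"
    using assms(1-3) by (rule colA_shift_block)
  also have "\<dots> = (\<lambda>m. \<Sum>j\<in>J. alpha n d a \<iota> j * vshift k (colA n d a j) m)"
    by (subst alpha_lincomb(2)[OF assms(2) _ assms(4)]) (use assms(3) in \<open>simp_all add: J_def vshift_lincomb\<close>)
  also have "\<dots> = (\<lambda>m. \<Sum>j\<in>J. alpha n d a \<iota> j * colA n d a (j + k * n) m)"
    using J_bounds by (simp add: colA_shift_block[OF assms(1)])
  also have "\<dots> = (\<lambda>m. \<Sum>t\<in>T. \<beta> t * colA n d a t m)"
    unfolding \<beta>_def T_def
    by (rule lincomb_of_lincombs, rule column_eq_vcol_lincomb) (auto dest: J_bounds)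
  finally have col: "colA n d a (\<iota> + k * n) = (\<lambda>m. \<Sum>t\<in>T. \<beta> t * colA n d a t m)" .
  have \<beta>_support: "\<forall>t. \<beta> t \<noteq> 0 \<longrightarrow> t \<in> piv n d a \<and> t < \<iota> + k * n"
  proof (intro allI impI)
    fix t
    assume "\<beta> t \<noteq> 0"
    then obtain j where "j \<in> J" "vcol n d a (j + k * n) t \<noteq> 0"
      unfolding \<beta>_def by (metis (no_types, lifting) mult_zero_right sum.neutral)
    then show "t \<in> piv n d a \<and> t < \<iota> + k * n"
      using J_bounds vcol_support[of "j + k * n"] by fastforce
  qed
  show nonpivotal: "\<iota> + k * n \<notin> piv n d a"
    using col by (intro not_pivotal_if_lincomb) (simp add: T_def)
  have "alpha n d a (\<iota> + k * n) = \<beta>"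
    using \<beta>_support col by (intro alpha_eqI) (simp_all add: T_def)
  then show "vcol n d a (\<iota> + k * n) =
      (\<lambda>t. \<Sum>j\<in>{j \<in> piv n d a. j < \<iota>}. alpha n d a \<iota> j * vcol n d a (j + k * n) t)"
    using vcol_nonpivotal[OF _ assms(3) nonpivotal] assms(2) by (simp add: \<beta>_def J_def fun_eq_iff)
qed

lemma bvec_shift_block:
  assumes "0 < n" "1 \<le> \<iota>" "\<iota> + k * n \<le> n * (d + 1)" "\<iota> \<notin> piv n d a"
  shows "bvec n d a (\<iota> + k * n) = (\<lambda>m. vshift (k * n) (bvec n d a \<iota>) m +
      (\<Sum>j\<in>{j \<in> piv n d a. j < \<iota> \<and> j + k * n \<in> nonpiv n d a}.
         alpha n d a \<iota> j * bvec n d a (j + k * n) m))"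
proof -
  define J where "J = {j \<in> piv n d a. j < \<iota>}"
  define J' where "J' = {j \<in> piv n d a. j < \<iota> \<and> j + k * n \<in> nonpiv n d a}"
  let ?\<alpha> = "alpha n d a \<iota>"
  have J_bounds: "0 < j \<and> j + k * n \<le> n * (d + 1)" if "j \<in> J" for j
    using that assms(3) piv_bounds[of j n d a] by (auto simp: J_def)
  have "vshift (k * n) (bvec n d a \<iota>) =
      vshift (k * n) (\<lambda>m. evec \<iota> m - (\<Sum>j\<in>J. ?\<alpha> j * evec j m))"
    using assms(4) by (simp add: bvec_def vcol_def J_def)
  also have "\<dots> = (\<lambda>m. evec (\<iota> + k * n) m - (\<Sum>j\<in>J. ?\<alpha> j * evec (j + k * n) m))"
    using assms(2) J_bounds by (simp add: vshift_diff vshift_lincomb vshift_evec)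
  finally have shifted: "vshift (k * n) (bvec n d a \<iota>) = \<dots>" .
  have "(\<Sum>j\<in>J. ?\<alpha> j * bvec n d a (j + k * n) m) =
      (\<Sum>j\<in>J. ?\<alpha> j * evec (j + k * n) m) - (\<Sum>j\<in>J. ?\<alpha> j * vcol n d a (j + k * n) m)" for m
    by (simp add: bvec_def right_diff_distrib sum_subtractf)
  moreover have "bvec n d a (\<iota> + k * n) m =
      evec (\<iota> + k * n) m - (\<Sum>j\<in>J. ?\<alpha> j * vcol n d a (j + k * n) m)" for m
    using vcol_shift_block(2)[OF assms] by (simp add: bvec_def J_def)
  moreover have "(\<Sum>j\<in>J. ?\<alpha> j * bvec n d a (j + k * n) m) =
      (\<Sum>j\<in>J'. ?\<alpha> j * bvec n d a (j + k * n) m)" for m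
  proof (rule sum.mono_neutral_right)
    show "\<forall>j\<in>J - J'. ?\<alpha> j * bvec n d a (j + k * n) m = 0"
    proof
      fix j
      assume j: "j \<in> J - J'"
      then have "j + k * n \<in> piv n d a"
        using J_bounds[of j] by (auto simp: J_def J'_def nonpiv_def)
      then show "?\<alpha> j * bvec n d a (j + k * n) m = 0" by (simp add: bvec_pivotal)
    qed
  qed (auto simp: J_def J'_def)
  ultimately show ?thesis
    unfolding J'_def[symmetric] shifted by (simp add: fun_eq_iff)
qed

theorem lemma8:
  fixes a :: "nat \<Rightarrow> 'a::field poly" and n d \<iota> k :: nat
  assumes "n > 1"
    and "\<exists>r\<in>{1..n}. a r \<noteq> 0"
    and "vdeg n a = d"
    and "\<iota> \<in> basic_nonpiv n d a"
    and "k \<le> (n * (d + 1) - \<iota>) div n"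
  shows "flat n d (bvec n d a (\<iota> + k * n)) =
    (\<lambda>r. [:0, 1:] ^ k * flat n d (bvec n d a \<iota>) r
        + (\<Sum>j\<in>{j \<in> piv n d a. j < \<iota> \<and> j + k * n \<in> nonpiv n d a}.
             smult (alpha n d a \<iota> j) (flat n d (bvec n d a (j + k * n)) r)))"
  \<comment> \<open>only n > 0 is needed\<close>
proof -
  have \<iota>: "1 \<le> \<iota>" "\<iota> \<le> n * (d + 1)" "\<iota> \<notin> piv n d a"
    using assms(4) by (auto simp: basic_nonpiv_def nonpiv_def)
  have "k * n \<le> (n * (d + 1) - \<iota>) div n * n"
    using assms(5) by (rule mult_le_mono1)
  then have kn: "k * n \<le> n * (d + 1) - \<iota>"
    using div_times_less_eq_dividend order_trans by blast
  have shifted: "flat n d (vshift (k * n) (bvec n d a \<iota>)) r = [:0, 1:] ^ k * flat n d (bvec n d a \<iota>) r" for r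
    using kn \<iota>(2) by (intro flat_vshift bvec_vanishes_above) linarith
  have "\<iota> + k * n \<le> n * (d + 1)"
    using kn \<iota>(2) by linarith
  with assms(1) \<iota> show ?thesis
    by (subst bvec_shift_block) (simp_all add: fun_eq_iff flat_add flat_lincomb shifted)
qed

end
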